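(* If a state $\Phi$ satisfies $D_{\min,\mathbb{F}}(\Phi)=D_{s,\mathbb{F}}(\Phi)=:r$, then for every $\epsilon\in[0,1)$, $$D^\epsilon_{H,\mathbb{F}}(\Phi)=r+\log\tfrac{1}{1-\epsilon},\qquad D^\epsilon_{\max,\mathbb{F}}(\Phi)=D^\epsilon_{s,\mathbb{F}}(\Phi)=\max\{r-\log\tfrac{1}{1-\epsilon},0\}.$$ If instead $\Phi$ satisfies $D_{\min,\mathrm{aff}(\mathbb{F})}(\Phi)=D_{\max,\mathbb{F}}(\Phi)=:r$, then for every $\epsilon\in[0,1)$, $$D^\epsilon_{H,\mathrm{aff}(\mathbb{F})}(\Phi)=D^\epsilon_{H,\mathbb{F}}(\Phi)=r+\log\tfrac{1}{1-\epsilon},\qquad D^\epsilon_{\max,\mathbb{F}}(\Phi)=\max\{r-\log\tfrac{1}{1-\epsilon},0\}.$$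
   Context: Finite-dimensional Hilbert space, $\log$ base 2. $\mathbb{F}$ is a convex and closed set of (free) states. $F(\rho,\sigma)=\|\sqrt\rho\sqrt\sigma\|_1^2$. $D_H^\epsilon(\rho\|\sigma)=\sup\{-\log\mathrm{Tr}[P\sigma]:0\le P\le\mathbb{1},\mathrm{Tr}[P\rho]\ge1-\epsilon\}$ (also used for Hermitian $\sigma$); $D_{\min}(\rho\|\sigma)=D_H^0(\rho\|\sigma)=-\log\mathrm{Tr}[\Pi_\rho\sigma]$. $D^\epsilon_{H,\mathbb{F}}(\rho)=\inf_{\sigma\in\mathbb{F}}D_H^\epsilon(\rho\|\sigma)$, $D_{\min,\mathbb{F}}=D^0_{H,\mathbb{F}}$; $\mathrm{aff}(\mathbb{F})$ is the affine hull, $D^\epsilon_{H,\mathrm{aff}(\mathbb{F})}(\rho)=\inf_{\sigma\in\mathrm{aff}(\mathbb{F})}D^\epsilon_H(\rho\|\sigma)$, $D_{\min,\mathrm{aff}(\mathbb{F})}=D^0_{H,\mathrm{aff}(\mathbb{F})}$. $D_{\max,\mathbb{F}}(\rho)=\inf\{\log(1+s):\frac{\rho+s\tau}{1+s}\in\mathbb{F},\tau\text{ a state}\}$; $D_{s,\mathbb{F}}(\rho)=\inf\{\log(1+s):\frac{\rho+s\tau}{1+s}\in\mathbb{F},\tau\in\mathbb{F}\}$. Smoothed: $D^\epsilon_{\max,\mathbb{F}}(\rho)=\inf\{D_{\max,\mathbb{F}}(\rho'):F(\rho',\rho)\ge1-\epsilon\}$ and $D^\epsilon_{s,\mathbb{F}}(\rho)=\inf\{D_{s,\mathbb{F}}(\rho'):F(\rho',\rho)\ge1-\epsilon\}$,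 infima over states $\rho'$. *)

theory Defs
  imports "HOL-Analysis.Analysis"
begin

text \<open>Operators on a finite-dimensional Hilbert space C^n, with n given by
  the finite index type 'n, are represented as complex n x n matrices.\<close>

definition adj :: "complex^'n^'n \<Rightarrow> complex^'n^'n" where
  "adj A = (\<chi> i j. cnj (A $ j $ i))"

definition hermitian :: "complex^'n^'n \<Rightarrow> bool" where
  "hermitian A \<longleftrightarrow> adj A = A"

definition psd :: "complex^'n^'n \<Rightarrow> bool" where
  "psd A \<longleftrightarrow> hermitian A \<and>
     (\<forall>v :: complex^'n. 0 \<le> Re (\<Sum>i\<in>UNIV. cnj (v $ i) * (A *v v) $ i))"

definition is_state :: "complex^'n^'n \<Rightarrow> bool" where
  "is_state \<rho> \<longleftrightarrow> psd \<rho> \<and> trace \<rho> = 1"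

text \<open>The (unique) positive semidefinite square root.\<close>
definition msqrt :: "complex^'n^'n \<Rightarrow> complex^'n^'n" where
  "msqrt A = (THE B. psd B \<and> B ** B = A)"

definition trace_norm :: "complex^'n^'n \<Rightarrow> real" where
  "trace_norm A = Re (trace (msqrt (adj A ** A)))"

definition fid :: "complex^'n^'n \<Rightarrow> complex^'n^'n \<Rightarrow> real" where
  "fid \<rho> \<sigma> = (trace_norm (msqrt \<rho> ** msqrt \<sigma>))\<^sup>2"

definition neglog :: "real \<Rightarrow> ereal" where
  "neglog t = (if t > 0 then ereal (- log 2 t) else \<infinity>)"

text \<open>Hypothesis testing relative entropy (sigma a state or Hermitian).\<close>
definition DH :: "real \<Rightarrow> complex^'n^'n \<Rightarrow> complex^'n^'n \<Rightarrow> ereal" where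
  "DH \<epsilon> \<rho> \<sigma> = (SUP P \<in> {P. psd P \<and> psd (mat 1 - P) \<and> 1 - \<epsilon> \<le> Re (trace (P ** \<rho>))}.
                     neglog (Re (trace (P ** \<sigma>))))"

definition Dmin :: "complex^'n^'n \<Rightarrow> complex^'n^'n \<Rightarrow> ereal" where
  "Dmin \<rho> \<sigma> = DH 0 \<rho> \<sigma>"

definition DH_set :: "real \<Rightarrow> (complex^'n^'n) set \<Rightarrow> complex^'n^'n \<Rightarrow> ereal" where
  "DH_set \<epsilon> S \<rho> = (INF \<sigma> \<in> S. DH \<epsilon> \<rho> \<sigma>)"

definition Dmin_set :: "(complex^'n^'n) set \<Rightarrow> complex^'n^'n \<Rightarrow> ereal" where
  "Dmin_set S \<rho> = DH_set 0 S \<rho>"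

definition Dmax_F :: "(complex^'n^'n) set \<Rightarrow> complex^'n^'n \<Rightarrow> ereal" where
  "Dmax_F F \<rho> = (INF s \<in> {s::real. 0 \<le> s \<and> (\<exists>\<tau>. is_state \<tau> \<and>
        (1 / (1 + s)) *\<^sub>R (\<rho> + s *\<^sub>R \<tau>) \<in> F)}. ereal (log 2 (1 + s)))"

definition Ds_F :: "(complex^'n^'n) set \<Rightarrow> complex^'n^'n \<Rightarrow> ereal" where
  "Ds_F F \<rho> = (INF s \<in> {s::real. 0 \<le> s \<and> (\<exists>\<tau>. \<tau> \<in> F \<and>
        (1 / (1 + s)) *\<^sub>R (\<rho> + s *\<^sub>R \<tau>) \<in> F)}. ereal (log 2 (1 + s)))"

definition Dmax_eps :: "(complex^'n^'n) set \<Rightarrow> real \<Rightarrow> complex^'n^'n \<Rightarrow> ereal" where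
  "Dmax_eps F \<epsilon> \<rho> = (INF \<rho>' \<in> {\<rho>'. is_state \<rho>' \<and> 1 - \<epsilon> \<le> fid \<rho>' \<rho>}. Dmax_F F \<rho>')"

definition Ds_eps :: "(complex^'n^'n) set \<Rightarrow> real \<Rightarrow> complex^'n^'n \<Rightarrow> ereal" where
  "Ds_eps F \<epsilon> \<rho> = (INF \<rho>' \<in> {\<rho>'. is_state \<rho>' \<and> 1 - \<epsilon> \<le> fid \<rho>' \<rho>}. Ds_F F \<rho>')"

end

theory Submission
  imports Defs
begin

text \<open>
  Upper bounds come from explicit feasible points. If the free state
  \<open>\<sigma> = (\<Phi> + s \<tau>) / (1 + s)\<close> witnesses the robustness of \<open>\<Phi>\<close>, every test accepting \<open>\<Phi>\<close> with
  probability \<open>1 - \<epsilon>\<close> has \<open>tr (P \<sigma>) \<ge> (1 - \<epsilon>) / (1 + s)\<close>, which bounds \<open>D\<^sub>H\<^sup>\<epsilon>\<close>; and either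
  \<open>(1 - \<epsilon>) \<Phi> + \<epsilon> \<tau>\<close> (which reaches \<open>\<sigma>\<close> with the smaller noise weight \<open>(1 - \<epsilon>)(1 + s) - 1\<close>)
  or \<open>\<sigma>\<close> itself is \<open>\<epsilon>\<close>-close to \<open>\<Phi>\<close> in fidelity, which bounds the smoothed robustness.
  Lower bounds come from tests accepting \<open>\<Phi>\<close> with certainty: scaled by \<open>1 - \<epsilon>\<close> they are
  \<open>\<epsilon>\<close>-tests for \<open>\<Phi>\<close>, and by \<open>F(\<rho>, \<Phi>) \<le> tr (P \<rho>)\<close>, a consequence of Hoelder's inequality for
  the trace norm, they accept every \<open>\<epsilon>\<close>-smoothing of \<open>\<Phi>\<close> with probability at least \<open>1 - \<epsilon>\<close>.
  When \<open>D\<^sub>m\<^sub>i\<^sub>n\<close> and the robustness coincide, the two kinds of bounds meet.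
\<close>

section \<open>Hermitian and positive semidefinite matrices\<close>

definition cinner :: "complex^'n \<Rightarrow> complex^'n \<Rightarrow> complex" where
  "cinner x y = (\<Sum>i\<in>UNIV. cnj (x$i) * y$i)"

abbreviation qform :: "complex^'n^'n \<Rightarrow> complex^'n \<Rightarrow> complex" where
  "qform A v \<equiv> cinner v (A *v v)"

lemma cinner_add_right: "cinner x (y + z) = cinner x y + cinner x z"
  by (simp add: cinner_def algebra_simps sum.distrib)

lemma cinner_add_left: "cinner (x + y) z = cinner x z + cinner y z"
  by (simp add: cinner_def algebra_simps sum.distrib)

lemma cinner_diff_right: "cinner x (y - z) = cinner x y - cinner x z"
  by (simp add: cinner_def algebra_simps sum_subtractf)

lemma cinner_diff_left: "cinner (x - y) z = cinner x z - cinner y z"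
  by (simp add: cinner_def algebra_simps sum_subtractf)

lemma cinner_scale_right: "cinner x (c *s y) = c * cinner x y"
  by (simp add: cinner_def sum_distrib_left algebra_simps)

lemma cinner_scale_left: "cinner (c *s x) y = cnj c * cinner x y"
  by (simp add: cinner_def sum_distrib_left algebra_simps)

lemma scaleR_complex: "c *\<^sub>R (z::complex) = of_real c * z"
  by (simp add: scaleR_conv_of_real)

lemma scaleR_vec_complex: "c *\<^sub>R (x::complex^'n) = of_real c *s x"
  by (simp add: vec_eq_iff scaleR_complex)

lemma cinner_scaleR_right: "cinner x (c *\<^sub>R y) = of_real c * cinner x y"
  by (simp add: scaleR_vec_complex cinner_scale_right)

lemma cinner_scaleR_left: "cinner (c *\<^sub>R x) y = of_real c * cinner x y"
  by (simp add: scaleR_vec_complex cinner_scale_left)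

lemma cinner_zero_right [simp]: "cinner x 0 = 0"
  by (simp add: cinner_def)

lemma cinner_zero_left [simp]: "cinner 0 x = 0"
  by (simp add: cinner_def)

lemma cinner_sum_right: "cinner x (sum f S) = (\<Sum>s\<in>S. cinner x (f s))"
  by (induct S rule: infinite_finite_induct) (auto simp: cinner_add_right)

lemma cinner_sum_left: "cinner (sum f S) y = (\<Sum>s\<in>S. cinner (f s) y)"
  by (induct S rule: infinite_finite_induct) (auto simp: cinner_add_left)

lemma cinner_commute: "cnj (cinner x y) = cinner y x"
  by (simp add: cinner_def mult.commute)

lemma Re_cinner: "Re (cinner x y) = inner x y"
  by (simp add: cinner_def inner_vec_def inner_complex_def)

lemma cinner_self: "cinner x x = of_real ((norm x)\<^sup>2)"
proof -
  have "Im (cinner x x) = 0" by (simp add: cinner_def)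
  moreover have "Re (cinner x x) = (norm x)\<^sup>2" by (simp add: Re_cinner power2_norm_eq_inner)
  ultimately show ?thesis by (simp add: complex_eq_iff)
qed

lemma cmod_cinner_commute: "cmod (cinner x y) = cmod (cinner y x)"
  by (metis cinner_commute complex_mod_cnj)

lemma cinner_self_eq_0: "cinner x x = 0 \<longleftrightarrow> x = 0"
  by (simp add: cinner_self)

lemma cinner_adj_right: "cinner x (A *v y) = cinner (adj A *v x) y"
  by (simp add: cinner_def adj_def matrix_vector_mult_def sum_distrib_left sum_distrib_right
      algebra_simps cnj_sum) (rule sum.swap)

lemma hermitian_cinner: "hermitian A \<Longrightarrow> cinner x (A *v y) = cinner (A *v x) y"
  by (metis cinner_adj_right hermitian_def)

lemma qform_hermitian_square: "hermitian S \<Longrightarrow> qform (S ** S) v = cinner (S *v v) (S *v v)"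
  by (simp add: matrix_vector_mul_assoc[symmetric] hermitian_cinner)

lemma qform_congruence: "hermitian G \<Longrightarrow> qform (G ** X ** G) v = qform X (G *v v)"
  by (simp add: matrix_vector_mul_assoc[symmetric] hermitian_cinner)

lemma adj_adj [simp]: "adj (adj A) = A"
  by (simp add: adj_def vec_eq_iff)

lemma adj_matrix_mult: "adj (A ** B) = adj B ** adj A"
  by (simp add: adj_def vec_eq_iff matrix_matrix_mult_def cnj_sum mult.commute)

lemma matrix_vector_mult_scaleR_left: "(c *\<^sub>R A) *v x = c *\<^sub>R (A *v (x::complex^'n))"
  by (simp add: vec_eq_iff matrix_vector_mult_def sum_distrib_left scaleR_complex
      algebra_simps)

lemma matrix_mult_diff_right: "(A::complex^'n^'n) ** (B - C) = A ** B - A ** C"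
  by (simp add: matrix_matrix_mult_def vec_eq_iff algebra_simps sum_subtractf)

lemma matrix_mult_diff_left: "((A::complex^'n^'n) - B) ** C = A ** C - B ** C"
  by (simp add: matrix_matrix_mult_def vec_eq_iff algebra_simps sum_subtractf)

lemma hermitian_diff: "hermitian A \<Longrightarrow> hermitian B \<Longrightarrow> hermitian (A - B)"
  by (simp add: hermitian_def adj_def vec_eq_iff)

lemma hermitian_scaleR_mat: "hermitian (c *\<^sub>R mat 1)"
  by (simp add: hermitian_def adj_def vec_eq_iff mat_def)

lemma psd_iff: "psd A \<longleftrightarrow> hermitian A \<and> (\<forall>v. 0 \<le> Re (qform A v))"
  by (simp add: psd_def cinner_def)

lemma psd_hermitian: "psd A \<Longrightarrow> hermitian A"
  by (simp add: psd_iff)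

lemma psd_qform_nonneg: "psd A \<Longrightarrow> 0 \<le> Re (qform A v)"
  by (simp add: psd_iff)

lemma psd_adj: "psd A \<Longrightarrow> adj A = A"
  by (simp add: psd_iff hermitian_def)

lemma psd_add: "psd A \<Longrightarrow> psd B \<Longrightarrow> psd (A + B)"
  by (auto simp: psd_iff hermitian_def adj_def vec_eq_iff matrix_vector_mult_add_rdistrib
      cinner_add_right)

lemma psd_scaleR: "psd A \<Longrightarrow> 0 \<le> c \<Longrightarrow> psd (c *\<^sub>R A)"
  by (auto simp: psd_iff hermitian_def adj_def vec_eq_iff matrix_vector_mult_scaleR_left
      cinner_scaleR_right)

lemma psd_zero: "psd (0::complex^'n^'n)"
  by (simp add: psd_iff hermitian_def adj_def vec_eq_iff matrix_vector_mult_def cinner_def)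

lemma psd_mat_1: "psd (mat 1 :: complex^'n^'n)"
  using hermitian_scaleR_mat[of 1] by (simp add: psd_iff cinner_self)

lemma psd_adj_congruence:
  assumes "psd Q"
  shows "psd (adj X ** Q ** X)"
proof -
  have "hermitian (adj X ** Q ** X)"
    using assms by (simp add: psd_adj hermitian_def adj_matrix_mult matrix_mul_assoc)
  moreover have "qform (adj X ** Q ** X) v = qform Q (X *v v)" for v
    by (simp add: matrix_vector_mul_assoc[symmetric] cinner_adj_right)
  ultimately show ?thesis using assms by (simp add: psd_iff)
qed

lemma psd_congruence: "psd G \<Longrightarrow> psd X \<Longrightarrow> psd (G ** X ** G)"
  using psd_adj_congruence[of X G] by (simp add: psd_adj)

lemma nonpos_quadratic_linear_coeff_zero:
  fixes a b :: real
  assumes "\<And>t. 2 * t * a + t\<^sup>2 * b \<le> 0"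
  shows "a = 0"
proof (rule ccontr)
  assume "a \<noteq> 0"
  define t where "t = a / (\<bar>b\<bar> + 1)"
  have ta: "t * a = a\<^sup>2 / (\<bar>b\<bar> + 1)" by (simp add: t_def power2_eq_square)
  have ta_pos: "t * a > 0" using \<open>a \<noteq> 0\<close> unfolding ta by (simp add: divide_pos_pos)
  have "t\<^sup>2 * \<bar>b\<bar> = (t * a) * (\<bar>b\<bar> / (\<bar>b\<bar> + 1))"
    by (simp add: t_def power2_eq_square field_simps)
  also have "\<dots> \<le> t * a"
    using ta_pos by (intro mult_left_le) (auto simp: divide_le_eq_1)
  finally have "t\<^sup>2 * \<bar>b\<bar> \<le> t * a" .
  moreover have "t\<^sup>2 * b \<ge> - (t\<^sup>2 * \<bar>b\<bar>)"
    by (metis abs_ge_minus_self abs_mult abs_power2 minus_le_iff)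
  ultimately have "2 * t * a + t\<^sup>2 * b > 0" using ta_pos by linarith
  with assms[of t] show False by simp
qed

lemma qform_expand:
  assumes "hermitian Q"
  shows "Re (qform Q (x + of_real t *s w)) =
           Re (qform Q x) + 2 * t * Re (cinner w (Q *v x)) + t\<^sup>2 * Re (qform Q w)"
proof -
  have "cinner x (Q *v w) = cnj (cinner w (Q *v x))"
    using assms by (simp add: hermitian_cinner cinner_commute)
  moreover have "Q *v (x + of_real t *s w) = Q *v x + of_real t *s (Q *v w)"
    by (simp add: vector_scalar_commute matrix_vector_right_distrib)
  ultimately have "qform Q (x + of_real t *s w) = qform Q x + of_real t * cnj (cinner w (Q *v x))
      + of_real t * cinner w (Q *v x) + of_real (t * t) * qform Q w"
    by (simp add: cinner_add_left cinner_add_right cinner_scale_left cinner_scale_right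
        algebra_simps)
  then show ?thesis by (simp add: power2_eq_square)
qed

lemma hermitian_qform_line_max:
  assumes "hermitian Q" "\<And>t::real. Re (qform Q (x + of_real t *s w)) \<le> Re (qform Q x)"
  shows "Re (cinner w (Q *v x)) = 0"
proof (rule nonpos_quadratic_linear_coeff_zero[of _ "Re (qform Q w)"])
  fix t :: real
  show "2 * t * Re (cinner w (Q *v x)) + t\<^sup>2 * Re (qform Q w) \<le> 0"
    using assms(2)[of t] qform_expand[OF assms(1), of x t w] by simp
qed

lemma psd_qform_eq_0_imp_kernel:
  assumes "psd Q" "Re (qform Q x) = 0"
  shows "Q *v x = 0"
proof -
  have neg: "cinner y ((- Q) *v z) = - cinner y (Q *v z)" for y z
    by (simp add: cinner_def matrix_vector_mult_def sum_negf)
  have "hermitian (- Q)"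
    using psd_hermitian[OF assms(1)] by (simp add: hermitian_def adj_def vec_eq_iff)
  then have "Re (cinner w ((- Q) *v x)) = 0" for w
    by (rule hermitian_qform_line_max)
      (use assms psd_qform_nonneg[OF assms(1)] in \<open>simp add: neg\<close>)
  from this[of "Q *v x"] show ?thesis by (simp add: neg cinner_self)
qed

lemma psd_antisym:
  assumes "psd D" "psd (- D)"
  shows "D = 0"
proof -
  have "Re (qform (- D) v) = - Re (qform D v)" for v
    by (simp add: cinner_def matrix_vector_mult_def sum_negf)
  then have "D *v v = 0" for v
    using psd_qform_eq_0_imp_kernel[OF assms(1)] psd_qform_nonneg[OF assms(1), of v]
      psd_qform_nonneg[OF assms(2), of v] by simp
  then show ?thesis by (simp add: matrix_eq)
qed

section \<open>Orthonormal families and the spectral theorem\<close>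

definition orthonormal :: "(complex^'n) set \<Rightarrow> bool" where
  "orthonormal B \<longleftrightarrow> (\<forall>u\<in>B. \<forall>v\<in>B. cinner u v = (if u = v then 1 else 0))"

definition fourier_complete :: "(complex^'n) set \<Rightarrow> bool" where
  "fourier_complete B \<longleftrightarrow> (\<forall>w. w = (\<Sum>u\<in>B. cinner u w *s u))"

definition orth_compl :: "(complex^'n) set \<Rightarrow> (complex^'n) set" where
  "orth_compl B = {y. \<forall>u\<in>B. cinner u y = 0}"

text \<open>\<open>outer_sum B f\<close> is the operator \<open>\<Sum>u\<in>B. f u |u\<rangle>\<langle>u|\<close>.\<close>
definition outer_sum :: "(complex^'n) set \<Rightarrow> (complex^'n \<Rightarrow> complex) \<Rightarrow> complex^'n^'n" where
  "outer_sum B f = (\<chi> i j. \<Sum>u\<in>B. f u * u$i * cnj (u$j))"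

lemma orthonormal_cinner_self: "orthonormal B \<Longrightarrow> u \<in> B \<Longrightarrow> cinner u u = 1"
  by (simp add: orthonormal_def)

lemma orthonormal_norm_eq_1: "orthonormal B \<Longrightarrow> u \<in> B \<Longrightarrow> norm u = 1"
  using Re_cinner[of u u] by (simp add: orthonormal_cinner_self norm_eq_1)

lemma orthonormal_finite_card:
  assumes "orthonormal (B :: (complex^'n) set)"
  shows "finite B" "card B \<le> DIM(complex^'n)"
proof -
  have "pairwise orthogonal B"
    using assms unfolding pairwise_def orthogonal_def orthonormal_def
    by (metis Re_cinner zero_complex.sel(1))
  moreover have "0 \<notin> B" using assms unfolding orthonormal_def by fastforce
  ultimately show "finite B" "card B \<le> DIM(complex^'n)"
    using independent_bound pairwise_orthogonal_independent by blast+
qed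

lemma orthonormal_sum_delta:
  assumes "orthonormal B" "v \<in> B"
  shows "(\<Sum>u\<in>B. (g u * cinner u v) *s u) = g v *s v"
proof -
  have "(\<Sum>u\<in>B. (g u * cinner u v) *s u) = (\<Sum>u\<in>B. if u = v then g v *s v else 0)"
    using assms by (intro sum.cong) (auto simp: orthonormal_def)
  also have "\<dots> = g v *s v"
    using assms orthonormal_finite_card(1)[OF assms(1)] by (simp add: sum.delta')
  finally show ?thesis .
qed

lemma fourier_remainder_orth_compl:
  assumes "orthonormal B"
  shows "w - (\<Sum>u\<in>B. cinner u w *s u) \<in> orth_compl B"
proof -
  have "cinner v (\<Sum>u\<in>B. cinner u w *s u) = cinner v w" if "v \<in> B" for v
  proof -
    have "cinner v (\<Sum>u\<in>B. cinner u w *s u) = (\<Sum>u\<in>B. if u = v then cinner v w else 0)"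
      using assms that
      by (auto simp: cinner_sum_right cinner_scale_right orthonormal_def intro!: sum.cong)
    also have "\<dots> = cinner v w"
      using that orthonormal_finite_card(1)[OF assms] by (simp add: sum.delta')
    finally show ?thesis .
  qed
  then show ?thesis by (simp add: orth_compl_def cinner_diff_right)
qed

lemma cnj_mult_self: "cnj z * z = of_real ((cmod z)\<^sup>2)"
  by (metis complex_norm_square mult.commute)

lemma bessel_inequality:
  assumes "finite I"
    and "\<And>i j. i \<in> I \<Longrightarrow> j \<in> I \<Longrightarrow> cinner (f i) (f j) = (if i = j then 1 else 0)"
  shows "(\<Sum>i\<in>I. (cmod (cinner (f i) c))\<^sup>2) \<le> (norm c)\<^sup>2"
proof -
  define a where "a i = cinner (f i) c" for i
  define p where "p = (\<Sum>i\<in>I. a i *s f i)"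
  have "cinner p c = (\<Sum>i\<in>I. cnj (a i) * a i)"
    by (simp add: p_def cinner_sum_left cinner_scale_left a_def)
  moreover have "cinner c p = (\<Sum>i\<in>I. cnj (a i) * a i)"
  proof -
    have "cinner c (f i) = cnj (a i)" for i by (simp add: a_def cinner_commute)
    then show ?thesis by (simp add: p_def cinner_sum_right cinner_scale_right mult.commute)
  qed
  moreover have "cinner p p = (\<Sum>i\<in>I. cnj (a i) * a i)"
  proof -
    have "cinner p p = (\<Sum>j\<in>I. \<Sum>i\<in>I. a j * (cnj (a i) * cinner (f i) (f j)))"
      by (simp add: p_def cinner_sum_left cinner_sum_right cinner_scale_left cinner_scale_right
          sum_distrib_left)
    also have "\<dots> = (\<Sum>j\<in>I. \<Sum>i\<in>I. if i = j then cnj (a j) * a j else 0)"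
      using assms(2) by (intro sum.cong) auto
    finally show ?thesis using assms(1) by (simp add: sum.delta)
  qed
  ultimately have "cinner (c - p) (c - p) = cinner c c - (\<Sum>i\<in>I. cnj (a i) * a i)"
    by (simp add: cinner_diff_left cinner_diff_right)
  then have "Re (cinner (c - p) (c - p)) = Re (cinner c c) - (\<Sum>i\<in>I. (cmod (a i))\<^sup>2)"
    by (simp add: Re_sum cnj_mult_self)
  then show ?thesis
    using inner_ge_zero[of "c - p"] by (simp add: a_def Re_cinner power2_norm_eq_inner)
qed

lemma outer_sum_mult_vec: "outer_sum B f *v w = (\<Sum>u\<in>B. (f u * cinner u w) *s u)"
proof -
  have "(outer_sum B f *v w) $ i = (\<Sum>u\<in>B. (f u * cinner u w) *s u) $ i" for i
  proof -
    have "(outer_sum B f *v w) $ i = (\<Sum>j\<in>UNIV. \<Sum>u\<in>B. f u * u$i * cnj (u$j) * w$j)"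
      by (simp add: outer_sum_def matrix_vector_mult_def sum_distrib_right)
    also have "\<dots> = (\<Sum>u\<in>B. \<Sum>j\<in>UNIV. f u * u$i * cnj (u$j) * w$j)"
      by (rule sum.swap)
    also have "\<dots> = (\<Sum>u\<in>B. (f u * cinner u w) *s u) $ i"
      by (simp add: cinner_def sum_distrib_left sum_component algebra_simps)
    finally show ?thesis .
  qed
  then show ?thesis by (simp add: vec_eq_iff)
qed

lemma outer_sum_eigenvector:
  "orthonormal B \<Longrightarrow> v \<in> B \<Longrightarrow> outer_sum B f *v v = f v *s v"
  using orthonormal_sum_delta by (simp add: outer_sum_mult_vec)

lemma qform_outer_sum: "qform (outer_sum B f) w = (\<Sum>u\<in>B. f u * (cnj (cinner u w) * cinner u w))"
  by (simp add: outer_sum_mult_vec cinner_sum_right cinner_scale_right cinner_commute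
      algebra_simps)

lemma outer_sum_cong: "(\<And>u. u \<in> B \<Longrightarrow> f u = g u) \<Longrightarrow> outer_sum B f = outer_sum B g"
  by (simp add: outer_sum_def vec_eq_iff)

lemma outer_sum_zero: "outer_sum B (\<lambda>_. 0) = 0"
  by (simp add: outer_sum_def vec_eq_iff)

lemma psd_outer_sum:
  assumes "\<And>u. u \<in> B \<Longrightarrow> l u \<ge> 0"
  shows "psd (outer_sum B (\<lambda>u. of_real (l u)))"
proof -
  have "hermitian (outer_sum B (\<lambda>u. of_real (l u)))"
    by (simp add: hermitian_def adj_def outer_sum_def vec_eq_iff algebra_simps)
  moreover have "Re (qform (outer_sum B (\<lambda>u. of_real (l u))) w) =
      (\<Sum>u\<in>B. l u * (cmod (cinner u w))\<^sup>2)" for w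
    by (simp add: qform_outer_sum Re_sum cnj_mult_self)
  ultimately show ?thesis using assms by (simp add: psd_iff sum_nonneg)
qed

lemma outer_sum_mult:
  assumes "orthonormal B"
  shows "outer_sum B f ** outer_sum B g = outer_sum B (\<lambda>u. f u * g u)"
  unfolding matrix_eq
proof
  fix w
  have "(outer_sum B f ** outer_sum B g) *v w = outer_sum B f *v (\<Sum>u\<in>B. (g u * cinner u w) *s u)"
    by (simp add: matrix_vector_mul_assoc[symmetric] outer_sum_mult_vec)
  also have "\<dots> = (\<Sum>u\<in>B. (g u * cinner u w) *s (outer_sum B f *v u))"
    by (simp add: vec.sum vector_scalar_commute)
  also have "\<dots> = (\<Sum>u\<in>B. (g u * cinner u w) *s (f u *s u))"
    using outer_sum_eigenvector[OF assms] by (intro sum.cong) auto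
  also have "\<dots> = outer_sum B (\<lambda>u. f u * g u) *v w"
    by (simp add: outer_sum_mult_vec vector_smult_assoc algebra_simps)
  finally show "(outer_sum B f ** outer_sum B g) *v w = outer_sum B (\<lambda>u. f u * g u) *v w" .
qed

lemma trace_mult_outer_sum: "trace (A ** outer_sum B f) = (\<Sum>u\<in>B. f u * qform A u)"
proof -
  have "trace (A ** outer_sum B f) =
      (\<Sum>i\<in>UNIV. \<Sum>j\<in>UNIV. \<Sum>u\<in>B. A$i$j * (f u * u$j * cnj (u$i)))"
    by (simp add: trace_def matrix_matrix_mult_def outer_sum_def sum_distrib_left)
  also have "\<dots> = (\<Sum>i\<in>UNIV. \<Sum>u\<in>B. \<Sum>j\<in>UNIV. A$i$j * (f u * u$j * cnj (u$i)))"
    by (intro sum.cong refl sum.swap)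
  also have "\<dots> = (\<Sum>u\<in>B. \<Sum>i\<in>UNIV. \<Sum>j\<in>UNIV. A$i$j * (f u * u$j * cnj (u$i)))"
    by (rule sum.swap)
  also have "\<dots> = (\<Sum>u\<in>B. f u * qform A u)"
    by (simp add: cinner_def matrix_vector_mult_def sum_distrib_left algebra_simps)
  finally show ?thesis .
qed

lemma trace_outer_sum: "orthonormal B \<Longrightarrow> trace (outer_sum B f) = (\<Sum>u\<in>B. f u)"
  using trace_mult_outer_sum[of "mat 1" B f] by (simp add: orthonormal_cinner_self)

lemma fourier_complete_outer_sum:
  assumes "fourier_complete B" "\<And>u. u \<in> B \<Longrightarrow> A *v u = f u *s u"
  shows "A = outer_sum B f"
  unfolding matrix_eq
proof
  fix w
  have "A *v w = A *v (\<Sum>u\<in>B. cinner u w *s u)"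
    using assms(1) unfolding fourier_complete_def by metis
  also have "\<dots> = (\<Sum>u\<in>B. cinner u w *s (f u *s u))"
    by (simp add: vec.sum vector_scalar_commute assms(2))
  also have "\<dots> = outer_sum B f *v w"
    by (simp add: outer_sum_mult_vec vector_smult_assoc algebra_simps)
  finally show "A *v w = outer_sum B f *v w" .
qed

lemma trace_fourier_complete:
  assumes "fourier_complete B"
  shows "trace A = (\<Sum>u\<in>B. qform A u)"
proof -
  have "mat 1 = outer_sum B (\<lambda>_. 1)"
    by (rule fourier_complete_outer_sum) (simp_all add: assms)
  then have "trace A = trace (A ** outer_sum B (\<lambda>_. 1))" by (metis matrix_mul_rid)
  then show ?thesis by (simp add: trace_mult_outer_sum)
qed

lemma qform_scaleR: "qform A (c *\<^sub>R v) = of_real (c\<^sup>2) * qform A v"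
  by (simp add: scaleR_vec_complex vector_scalar_commute cinner_scale_left cinner_scale_right
      power2_eq_square)

lemma hermitian_orth_compl_invariant:
  assumes "hermitian A" "\<And>u. u \<in> B \<Longrightarrow> A *v u = of_real (l u) *s u" "y \<in> orth_compl B"
  shows "A *v y \<in> orth_compl B"
  using assms hermitian_cinner[OF assms(1)] by (simp add: orth_compl_def cinner_scale_left)

lemma orth_compl_max_qform:
  assumes "x \<in> orth_compl B" "x \<noteq> 0"
  obtains v where "v \<in> orth_compl B" "norm v = 1"
    "\<And>y. y \<in> orth_compl B \<Longrightarrow> Re (qform A y) \<le> Re (qform A v) * (norm y)\<^sup>2"
proof -
  define K where "K = orth_compl B \<inter> {y. norm y = 1}"
  have normalize: "(1 / norm y) *\<^sub>R y \<in> K" if "y \<in> orth_compl B" "y \<noteq> 0" for y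
    using that by (simp add: K_def orth_compl_def cinner_scaleR_right)
  have "closed (orth_compl B)"
  proof -
    have "orth_compl B = (\<Inter>u\<in>B. {y. cinner u y = 0})" by (auto simp: orth_compl_def)
    moreover have "closed {y. cinner u y = 0}" for u
      by (rule closed_Collect_eq) (auto simp: cinner_def intro!: continuous_intros)
    ultimately show ?thesis by auto
  qed
  moreover have "closed {y::complex^'n. norm y = 1}"
    by (rule closed_Collect_eq) (auto intro!: continuous_intros)
  ultimately have "compact K"
    unfolding K_def compact_eq_bounded_closed by (auto simp: bounded_iff)
  moreover have "K \<noteq> {}" using normalize[OF assms] by blast
  moreover have "continuous_on K (\<lambda>y. Re (qform A y))"
    unfolding cinner_def matrix_vector_mult_def by (intro continuous_intros)
  ultimately have "\<exists>v\<in>K. \<forall>y\<in>K. Re (qform A y) \<le> Re (qform A v)"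
    by (rule continuous_attains_sup)
  then obtain v where v: "v \<in> K" and max: "\<And>y. y \<in> K \<Longrightarrow> Re (qform A y) \<le> Re (qform A v)"
    by blast
  have "Re (qform A y) \<le> Re (qform A v) * (norm y)\<^sup>2" if "y \<in> orth_compl B" for y
  proof (cases "y = 0")
    case False
    have "Re (qform A ((1 / norm y) *\<^sub>R y)) = Re (qform A y) / (norm y)\<^sup>2"
      by (simp add: qform_scaleR power_divide)
    then show ?thesis
      using max[OF normalize[OF that False]] False by (simp add: divide_le_eq mult.commute)
  qed simp
  with v that show ?thesis by (auto simp: K_def)
qed

text \<open>The form of \<open>H = A - \<mu>\<close> attains its maximum \<open>0\<close> on the \<open>A\<close>-invariant subspace at \<open>v\<close>,
  so \<open>H v\<close> lies in the subspace and, by the first-order condition, is orthogonal to it.\<close>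
lemma orth_compl_max_qform_eigenvector:
  assumes herm: "hermitian A" and eig: "\<And>u. u \<in> B \<Longrightarrow> A *v u = of_real (l u) *s u"
    and v: "v \<in> orth_compl B" "norm v = 1"
    and max: "\<And>y. y \<in> orth_compl B \<Longrightarrow> Re (qform A y) \<le> Re (qform A v) * (norm y)\<^sup>2"
  shows "A *v v = of_real (Re (qform A v)) *s v"
proof -
  define \<mu> where "\<mu> = Re (qform A v)"
  define H where "H = A - \<mu> *\<^sub>R mat 1"
  have qform_H: "Re (qform H y) = Re (qform A y) - \<mu> * (norm y)\<^sup>2" for y
    by (simp add: H_def matrix_vector_mult_diff_rdistrib matrix_vector_mult_scaleR_left
        cinner_diff_right cinner_scaleR_right cinner_self)
  have "H *v v \<in> orth_compl B"
    using hermitian_orth_compl_invariant[OF herm eig v(1)] v(1)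
    by (simp add: H_def matrix_vector_mult_diff_rdistrib matrix_vector_mult_scaleR_left
        orth_compl_def cinner_diff_right cinner_scaleR_right)
  moreover have "Re (cinner w (H *v v)) = 0" if "w \<in> orth_compl B" for w
  proof (rule hermitian_qform_line_max)
    show "hermitian H" unfolding H_def by (intro hermitian_diff herm hermitian_scaleR_mat)
    fix t :: real
    have "v + of_real t *s w \<in> orth_compl B"
      using v(1) that by (simp add: orth_compl_def cinner_add_right cinner_scale_right)
    then show "Re (qform H (v + of_real t *s w)) \<le> Re (qform H v)"
      using max qform_H v(2) by (simp add: \<mu>_def)
  qed
  ultimately have "H *v v = 0" by (metis Re_cinner inner_eq_zero_iff)
  then show ?thesis
    by (simp add: H_def \<mu>_def matrix_vector_mult_diff_rdistrib matrix_vector_mult_scaleR_left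
        scaleR_vec_complex)
qed

lemma hermitian_eigenvector_in_orth_compl:
  assumes "hermitian A" "\<And>u. u \<in> B \<Longrightarrow> A *v u = of_real (l u) *s u"
    and "x \<in> orth_compl B" "x \<noteq> 0"
  obtains v \<mu> where "v \<in> orth_compl B" "cinner v v = 1" "A *v v = of_real \<mu> *s v"
  using orth_compl_max_qform[OF assms(3,4)] orth_compl_max_qform_eigenvector[OF assms(1,2)]
  by (metis cinner_self of_real_1 power_one)

text \<open>A maximal orthonormal family of eigenvectors is complete, for otherwise the Fourier
  remainder of some vector yields a further eigenvector orthogonal to the family.\<close>
theorem hermitian_eigenbasis:
  assumes herm: "hermitian (A :: complex^'n^'n)"
  obtains B l where "orthonormal B" "fourier_complete B"
    "\<And>u. u \<in> B \<Longrightarrow> A *v u = of_real (l u) *s u"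
proof -
  define P where "P k \<longleftrightarrow> (\<exists>B l. orthonormal B \<and> (\<forall>u\<in>B. A *v u = of_real (l u) *s u) \<and> card B = k)"
    for k
  have P0: "P 0" unfolding P_def by (rule exI[of _ "{}"]) (auto simp: orthonormal_def)
  have P_bound: "k \<le> DIM(complex^'n)" if "P k" for k
    using that orthonormal_finite_card(2) unfolding P_def by blast
  have "P (Greatest P)" using GreatestI_nat[where P=P, OF P0] P_bound by blast
  then obtain B l where orth: "orthonormal B" and eig: "\<forall>u\<in>B. A *v u = of_real (l u) *s u"
    and card: "card B = Greatest P"
    unfolding P_def by blast
  have "fourier_complete B"
  proof (rule ccontr)
    assume "\<not> fourier_complete B"
    then obtain w where w: "w - (\<Sum>u\<in>B. cinner u w *s u) \<noteq> 0"
      unfolding fourier_complete_def by auto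
    obtain v \<mu> where v: "v \<in> orth_compl B" "cinner v v = 1" "A *v v = of_real \<mu> *s v"
      using eig by (blast intro: hermitian_eigenvector_in_orth_compl[OF herm _
          fourier_remainder_orth_compl[OF orth] w])
    have "v \<notin> B" using v(1,2) by (auto simp: orth_compl_def)
    have "cinner v u = 0" if "u \<in> B" for u
      using v(1) that cinner_commute[of u v] by (auto simp: orth_compl_def)
    then have "orthonormal (insert v B)"
      using orth v(1,2) \<open>v \<notin> B\<close> by (auto simp: orthonormal_def orth_compl_def)
    moreover have "\<forall>u\<in>insert v B. A *v u = of_real ((l(v := \<mu>)) u) *s u"
      using eig v(3) \<open>v \<notin> B\<close> by auto
    moreover have "card (insert v B) = Suc (Greatest P)"
      using orthonormal_finite_card(1)[OF orth] \<open>v \<notin> B\<close> card by simp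
    ultimately have "P (Suc (Greatest P))" unfolding P_def by blast
    then have "Suc (Greatest P) \<le> Greatest P" using Greatest_le_nat[where P=P] P_bound by blast
    then show False by simp
  qed
  with orth eig that show ?thesis by blast
qed

lemma psd_spectral_decomposition:
  assumes "psd A"
  obtains B l where "orthonormal B" "fourier_complete B" "\<And>u. u \<in> B \<Longrightarrow> l u \<ge> 0"
    "\<And>u. u \<in> B \<Longrightarrow> A *v u = of_real (l u) *s u" "A = outer_sum B (\<lambda>u. of_real (l u))"
proof -
  obtain B l where B: "orthonormal B" "fourier_complete B"
    and eig: "\<And>u. u \<in> B \<Longrightarrow> A *v u = of_real (l u) *s u"
    using hermitian_eigenbasis[OF psd_hermitian[OF assms]] by blast
  have "l u \<ge> 0" if "u \<in> B" for u
    using psd_qform_nonneg[OF assms, of u] eig[OF that] orthonormal_cinner_self[OF B(1) that]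
    by (simp add: cinner_scale_right)
  with B eig fourier_complete_outer_sum[OF B(2) eig] that show ?thesis by blast
qed

section \<open>Square roots and traces of positive matrices\<close>

lemma psd_sqrt_exists:
  assumes "psd A"
  obtains S where "psd S" "S ** S = A"
proof -
  obtain B l where B: "orthonormal B" "fourier_complete B"
    and l: "\<And>u. u \<in> B \<Longrightarrow> l u \<ge> 0" "\<And>u. u \<in> B \<Longrightarrow> A *v u = of_real (l u) *s u"
    and A: "A = outer_sum B (\<lambda>u. of_real (l u))"
    using psd_spectral_decomposition[OF assms] by blast
  have "outer_sum B (\<lambda>u. of_real (sqrt (l u))) ** outer_sum B (\<lambda>u. of_real (sqrt (l u))) = A"
    unfolding outer_sum_mult[OF B(1)] A by (rule outer_sum_cong) (simp add: l flip: of_real_mult)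
  with psd_outer_sum[of B "\<lambda>u. sqrt (l u)"] l that show ?thesis by simp
qed

text \<open>For an eigenvector \<open>u\<close> of \<open>S - N\<close> with eigenvalue \<open>\<lambda> < 0\<close>, expanding
  \<open>\<parallel>N u\<parallel>\<^sup>2 = \<parallel>S u - \<lambda> u\<parallel>\<^sup>2 \<le> \<parallel>S u\<parallel>\<^sup>2\<close> contradicts \<open>\<langle>u, S u\<rangle> \<ge> 0\<close>.\<close>
lemma psd_diff_if_psd_square_diff:
  assumes S: "psd S" and N: "psd N" and SN: "psd (S ** S - N ** N)"
  shows "psd (S - N)"
proof -
  obtain B l where B: "orthonormal B" "fourier_complete B"
    and eig: "\<And>u. u \<in> B \<Longrightarrow> (S - N) *v u = of_real (l u) *s u"
    using hermitian_eigenbasis[OF hermitian_diff[OF psd_hermitian[OF S] psd_hermitian[OF N]]]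
    by blast
  have "l u \<ge> 0" if u: "u \<in> B" for u
  proof (rule ccontr)
    assume neg: "\<not> l u \<ge> 0"
    define a where "a = S *v u"
    have Nu: "N *v u = a - of_real (l u) *s u"
      using eig[OF u] by (simp add: a_def matrix_vector_mult_diff_rdistrib algebra_simps)
    have "Re (cinner (N *v u) (N *v u)) = Re (cinner a a) - 2 * l u * Re (cinner u a) + l u * l u"
      using orthonormal_cinner_self[OF B(1) u] inner_commute[of a u]
      by (simp add: Nu cinner_diff_left cinner_diff_right cinner_scale_left cinner_scale_right
          Re_cinner right_diff_distrib)
    moreover have "0 \<le> Re (cinner a a) - Re (cinner (N *v u) (N *v u))"
      using psd_qform_nonneg[OF SN, of u]
      by (simp add: a_def matrix_vector_mult_diff_rdistrib cinner_diff_right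
          qform_hermitian_square psd_hermitian S N)
    moreover have "l u * Re (cinner u a) \<le> 0"
      using neg psd_qform_nonneg[OF S] by (simp add: a_def mult_nonpos_nonneg)
    moreover have "l u * l u > 0" using neg by (simp add: mult_neg_neg)
    ultimately show False by linarith
  qed
  then show ?thesis
    using fourier_complete_outer_sum[OF B(2) eig] psd_outer_sum[of B l] by simp
qed

lemma psd_sqrt_unique:
  assumes "psd S" "psd N" "S ** S = N ** N"
  shows "S = N"
proof -
  have "psd (S - N)"
    by (rule psd_diff_if_psd_square_diff) (use assms psd_zero in simp_all)
  moreover have "psd (N - S)"
    by (rule psd_diff_if_psd_square_diff) (use assms psd_zero in simp_all)
  then have "psd (- (S - N))" by simp
  ultimately show ?thesis using psd_antisym[of "S - N"] by simp
qed

lemma msqrt_unique: "psd S \<Longrightarrow> S ** S = A \<Longrightarrow> msqrt A = S"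
  unfolding msqrt_def using psd_sqrt_unique by blast

lemma
  assumes "psd A"
  shows psd_msqrt: "psd (msqrt A)" and msqrt_square: "msqrt A ** msqrt A = A"
proof -
  obtain S where "psd S" "S ** S = A" using psd_sqrt_exists[OF assms] by blast
  moreover from this have "msqrt A = S" by (rule msqrt_unique)
  ultimately show "psd (msqrt A)" "msqrt A ** msqrt A = A" by simp_all
qed

lemma qform_axis: "qform X (axis i 1) = X $ i $ i"
  by (simp add: cinner_def axis_def matrix_vector_mult_def if_distrib if_distribR cong: if_cong)

lemma trace_psd_nonneg:
  assumes "psd X"
  shows "Re (trace X) \<ge> 0"
proof -
  have "trace X = (\<Sum>i\<in>UNIV. qform X (axis i 1))" by (simp add: trace_def qform_axis)
  then show ?thesis by (simp add: Re_sum sum_nonneg psd_qform_nonneg[OF assms])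
qed

lemma psd_trace_eq_0:
  assumes "psd Y" "Re (trace Y) = 0"
  shows "Y = 0"
proof -
  obtain B l where B: "orthonormal B" "fourier_complete B"
    and l: "\<And>u. u \<in> B \<Longrightarrow> l u \<ge> 0" "\<And>u. u \<in> B \<Longrightarrow> Y *v u = of_real (l u) *s u"
    and Y: "Y = outer_sum B (\<lambda>u. of_real (l u))"
    using psd_spectral_decomposition[OF assms(1)] by blast
  have "(\<Sum>u\<in>B. l u) = 0"
    using assms(2) by (simp add: Y trace_outer_sum[OF B(1)] Re_sum)
  then have "\<forall>u\<in>B. l u = 0"
    using l orthonormal_finite_card(1)[OF B(1)] by (simp add: sum_nonneg_eq_0_iff)
  then show ?thesis by (simp add: Y outer_sum_cong[of B _ "\<lambda>_. 0"] outer_sum_zero)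
qed

lemma trace_mult_psd_nonneg:
  assumes "psd P" "psd Q"
  shows "Re (trace (P ** Q)) \<ge> 0"
proof -
  let ?R = "msqrt P"
  have "trace (P ** Q) = trace (?R ** (?R ** Q))"
    by (simp add: matrix_mul_assoc msqrt_square[OF assms(1)])
  also have "\<dots> = trace ((?R ** Q) ** ?R)"
    by (rule trace_mul_sym)
  also have "\<dots> = trace (adj ?R ** Q ** ?R)"
    by (simp add: psd_adj[OF psd_msqrt[OF assms(1)]] matrix_mul_assoc)
  finally show ?thesis
    using trace_psd_nonneg[OF psd_adj_congruence[OF assms(2)]] by simp
qed

text \<open>Expand \<open>Y\<close> in its eigenbasis and apply Bessel's inequality to each eigenvector.\<close>
lemma sum_qform_orthonormal_le_trace:
  assumes Y: "psd Y" and I: "finite I"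
    and w: "\<And>i j. i \<in> I \<Longrightarrow> j \<in> I \<Longrightarrow> cinner (w i) (w j) = (if i = j then 1 else 0)"
  shows "(\<Sum>i\<in>I. Re (qform Y (w i))) \<le> Re (trace Y)"
proof -
  obtain C l where C: "orthonormal C" "fourier_complete C"
    and l: "\<And>u. u \<in> C \<Longrightarrow> l u \<ge> 0" "\<And>u. u \<in> C \<Longrightarrow> Y *v u = of_real (l u) *s u"
    and Y_eq: "Y = outer_sum C (\<lambda>u. of_real (l u))"
    using psd_spectral_decomposition[OF Y] by blast
  have qform_Y: "Re (qform Y x) = (\<Sum>c\<in>C. l c * (cmod (cinner x c))\<^sup>2)" for x
  proof -
    have "Re (qform Y x) = (\<Sum>c\<in>C. l c * (cmod (cinner c x))\<^sup>2)"
      by (simp add: Y_eq qform_outer_sum Re_sum cnj_mult_self)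
    then show ?thesis by (simp add: cmod_cinner_commute)
  qed
  have "(\<Sum>i\<in>I. Re (qform Y (w i))) = (\<Sum>c\<in>C. l c * (\<Sum>i\<in>I. (cmod (cinner (w i) c))\<^sup>2))"
    unfolding qform_Y by (simp add: sum_distrib_left) (rule sum.swap)
  also have "\<dots> \<le> (\<Sum>c\<in>C. l c * (norm c)\<^sup>2)"
    by (intro sum_mono mult_left_mono bessel_inequality[OF I w]) (auto simp: l)
  also have "\<dots> = (\<Sum>c\<in>C. l c)"
    by (rule sum.cong) (simp_all add: orthonormal_norm_eq_1[OF C(1)])
  also have "\<dots> = Re (trace Y)"
    by (simp add: Y_eq trace_outer_sum[OF C(1)] Re_sum)
  finally show ?thesis .
qed

lemma trace_scaleR: "trace (c *\<^sub>R (A::complex^'n^'n)) = of_real c * trace A"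
  by (simp add: trace_def sum_distrib_left scaleR_complex)

section \<open>Trace norm and fidelity\<close>

lemma trace_norm_singular_basis:
  obtains B where "orthonormal B" "fourier_complete B"
    "\<And>u v. u \<in> B \<Longrightarrow> v \<in> B \<Longrightarrow> u \<noteq> v \<Longrightarrow> cinner (Z *v u) (Z *v v) = 0"
    "trace_norm Z = (\<Sum>u\<in>B. norm (Z *v u))"
proof -
  have ZZ: "psd (adj Z ** Z)"
    using psd_adj_congruence[OF psd_mat_1, of Z] by simp
  obtain B m where B: "orthonormal B" "fourier_complete B"
    and m: "\<And>u. u \<in> B \<Longrightarrow> m u \<ge> 0" "\<And>u. u \<in> B \<Longrightarrow> (adj Z ** Z) *v u = of_real (m u) *s u"
    and ZZ_eq: "adj Z ** Z = outer_sum B (\<lambda>u. of_real (m u))"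
    using psd_spectral_decomposition[OF ZZ] by blast
  have cinner_image: "cinner (Z *v u) (Z *v v) = of_real (m v) * cinner u v" if "v \<in> B" for u v
    using m(2)[OF that] cinner_adj_right[of u "adj Z" "Z *v v"]
    by (simp add: matrix_vector_mul_assoc[symmetric] cinner_scale_right)
  have "msqrt (adj Z ** Z) = outer_sum B (\<lambda>u. of_real (sqrt (m u)))"
  proof (rule msqrt_unique)
    show "psd (outer_sum B (\<lambda>u. of_real (sqrt (m u))))" by (rule psd_outer_sum) (simp add: m(1))
    show "outer_sum B (\<lambda>u. of_real (sqrt (m u))) ** outer_sum B (\<lambda>u. of_real (sqrt (m u))) =
        adj Z ** Z"
      unfolding outer_sum_mult[OF B(1)] ZZ_eq
      by (rule outer_sum_cong) (simp add: m(1) flip: of_real_mult)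
  qed
  moreover have "sqrt (m u) = norm (Z *v u)" if "u \<in> B" for u
    using arg_cong[where f=Re, OF cinner_image[OF that, of u]] orthonormal_cinner_self[OF B(1) that]
    by (simp add: Re_cinner norm_eq_sqrt_inner)
  ultimately have "trace_norm Z = (\<Sum>u\<in>B. norm (Z *v u))"
    by (simp add: trace_norm_def trace_outer_sum[OF B(1)] Re_sum)
  moreover have "cinner (Z *v u) (Z *v v) = 0" if "u \<in> B" "v \<in> B" "u \<noteq> v" for u v
    using cinner_image[OF that(2)] B(1) that by (simp add: orthonormal_def)
  ultimately show ?thesis using B that by blast
qed

lemma cinner_normalize_orthogonal:
  assumes "cinner x y = 0 \<or> x = y"
  shows "cinner ((1 / norm x) *\<^sub>R x) ((1 / norm y) *\<^sub>R y) =
           (if x = y \<and> x \<noteq> 0 then 1 else 0)"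
  using assms by (auto simp: cinner_scaleR_left cinner_scaleR_right cinner_self power2_eq_square)

lemma sum_sq_norm_adj_normalized_le:
  assumes "finite B" and orth: "\<And>u v. u \<in> B \<Longrightarrow> v \<in> B \<Longrightarrow> u \<noteq> v \<Longrightarrow> cinner (f u) (f v) = 0"
  shows "(\<Sum>u\<in>B. (norm (adj X *v ((1 / norm (f u)) *\<^sub>R f u)))\<^sup>2) \<le> Re (trace (X ** adj X))"
proof -
  define w where "w u = (1 / norm (f u)) *\<^sub>R f u" for u
  let ?B' = "{u \<in> B. f u \<noteq> 0}"
  have "(\<Sum>u\<in>B. (norm (adj X *v w u))\<^sup>2) = (\<Sum>u\<in>?B'. Re (qform (X ** adj X) (w u)))"
    by (rule sum.mono_neutral_cong_right)
      (auto simp: assms(1) w_def Re_cinner power2_norm_eq_inner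
        matrix_vector_mul_assoc[symmetric] cinner_adj_right[of _ X])
  also have "\<dots> \<le> Re (trace (X ** adj X))"
  proof (rule sum_qform_orthonormal_le_trace)
    show "psd (X ** adj X)" using psd_adj_congruence[OF psd_mat_1, of "adj X"] by simp
    show "finite ?B'" using assms(1) by simp
    fix i j assume "i \<in> ?B'" "j \<in> ?B'"
    then show "cinner (w i) (w j) = (if i = j then 1 else 0)"
      using cinner_normalize_orthogonal[of "f i" "f j"] orth[of i j]
      by (cases "i = j") (auto simp: w_def cinner_self_eq_0)
  qed
  finally show ?thesis by (simp add: w_def)
qed

text \<open>Hoelder's inequality \<open>\<parallel>X Y\<parallel>\<^sub>1 \<le> \<parallel>X\<parallel>\<^sub>2 \<parallel>Y\<parallel>\<^sub>2\<close>, by Cauchy-Schwarz in the singular-value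
  basis of \<open>X Y\<close>.\<close>
lemma trace_norm_mult_le:
  "(trace_norm (X ** Y))\<^sup>2 \<le> Re (trace (X ** adj X)) * Re (trace (adj Y ** Y))"
proof -
  let ?Z = "X ** Y"
  obtain B where B: "orthonormal B" "fourier_complete B"
    and orth: "\<And>u v. u \<in> B \<Longrightarrow> v \<in> B \<Longrightarrow> u \<noteq> v \<Longrightarrow> cinner (?Z *v u) (?Z *v v) = 0"
    and tn: "trace_norm ?Z = (\<Sum>u\<in>B. norm (?Z *v u))"
    using trace_norm_singular_basis[of ?Z] by blast
  define a where "a u = norm (adj X *v ((1 / norm (?Z *v u)) *\<^sub>R (?Z *v u)))" for u
  define b where "b u = norm (Y *v u)" for u
  have "norm (?Z *v u) \<le> a u * b u" for u
  proof -
    have "norm (?Z *v u) = Re (cinner ((1 / norm (?Z *v u)) *\<^sub>R (?Z *v u)) (?Z *v u))"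
      by (simp add: cinner_scaleR_left cinner_self power2_eq_square)
    also have "\<dots> = inner (adj X *v ((1 / norm (?Z *v u)) *\<^sub>R (?Z *v u))) (Y *v u)"
      by (simp add: cinner_adj_right matrix_vector_mul_assoc[symmetric] flip: Re_cinner)
    also have "\<dots> \<le> a u * b u"
      unfolding a_def b_def by (rule norm_cauchy_schwarz)
    finally show ?thesis .
  qed
  then have "trace_norm ?Z \<le> (\<Sum>u\<in>B. a u * b u)"
    unfolding tn by (rule sum_mono)
  then have "(trace_norm ?Z)\<^sup>2 \<le> (\<Sum>u\<in>B. a u * b u)\<^sup>2"
    by (rule power_mono) (simp add: tn sum_nonneg)
  also have "\<dots> \<le> (\<Sum>u\<in>B. (a u)\<^sup>2) * (\<Sum>u\<in>B. (b u)\<^sup>2)"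
    by (rule Cauchy_Schwarz_ineq_sum)
  also have "\<dots> \<le> Re (trace (X ** adj X)) * (\<Sum>u\<in>B. (b u)\<^sup>2)"
    unfolding a_def
    by (intro mult_right_mono sum_sq_norm_adj_normalized_le orth)
      (simp_all add: orthonormal_finite_card(1)[OF B(1)] sum_nonneg)
  also have "(\<Sum>u\<in>B. (b u)\<^sup>2) = Re (trace (adj Y ** Y))"
    by (simp add: trace_fourier_complete[OF B(2)] Re_sum b_def matrix_vector_mul_assoc[symmetric]
        cinner_adj_right[of _ "adj Y"] Re_cinner power2_norm_eq_inner)
  finally show ?thesis .
qed

lemma fid_eq_trace_msqrt_congruence:
  assumes "psd \<rho>" "psd \<Phi>"
  shows "fid \<rho> \<Phi> = (Re (trace (msqrt (msqrt \<Phi> ** \<rho> ** msqrt \<Phi>))))\<^sup>2"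
proof -
  let ?R = "msqrt \<rho>" and ?G = "msqrt \<Phi>"
  have "adj (?R ** ?G) ** (?R ** ?G) = ?G ** (?R ** ?R) ** ?G"
    by (simp add: adj_matrix_mult psd_adj psd_msqrt assms matrix_mul_assoc)
  then show ?thesis by (simp add: fid_def trace_norm_def msqrt_square assms)
qed

text \<open>Operator monotonicity of the square root gives
  \<open>\<surd>(\<surd>\<Phi> \<rho> \<surd>\<Phi>) \<ge> \<surd>(p \<Phi>\<^sup>2) = \<surd>p \<Phi>\<close>, whose trace is \<open>\<surd>p\<close>.\<close>
lemma fid_ge_if_psd_diff:
  assumes \<rho>: "psd \<rho>" and \<Phi>: "is_state \<Phi>" and p: "0 \<le> p" and diff: "psd (\<rho> - p *\<^sub>R \<Phi>)"
  shows "p \<le> fid \<rho> \<Phi>"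
proof -
  have \<Phi>_psd: "psd \<Phi>" using \<Phi> by (simp add: is_state_def)
  let ?G = "msqrt \<Phi>"
  let ?T = "msqrt (?G ** \<rho> ** ?G)" and ?N = "sqrt p *\<^sub>R \<Phi>"
  have GG: "?G ** ?G = \<Phi>" and G: "psd ?G" using \<Phi>_psd by (simp_all add: msqrt_square psd_msqrt)
  have M: "psd (?G ** \<rho> ** ?G)" by (rule psd_congruence[OF G \<rho>])
  have "\<Phi> ** \<Phi> = ?G ** \<Phi> ** ?G" by (metis GG matrix_mul_assoc)
  then have "?N ** ?N = p *\<^sub>R (?G ** \<Phi> ** ?G)"
    using p by (simp add: matrix_scalar_ac flip: scalar_matrix_assoc)
  then have "?T ** ?T - ?N ** ?N = ?G ** (\<rho> - p *\<^sub>R \<Phi>) ** ?G"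
    by (simp add: msqrt_square[OF M] matrix_mult_diff_left matrix_mult_diff_right
        matrix_scalar_ac scalar_matrix_assoc)
  moreover have "psd ?N" using \<Phi>_psd p by (simp add: psd_scaleR)
  ultimately have "psd (?T - ?N)"
    using psd_diff_if_psd_square_diff[OF psd_msqrt[OF M]] psd_congruence[OF G diff] by simp
  then have "sqrt p \<le> Re (trace ?T)"
    using trace_psd_nonneg[of "?T - ?N"] \<Phi> by (simp add: trace_sub trace_scaleR is_state_def)
  then have "(sqrt p)\<^sup>2 \<le> (Re (trace ?T))\<^sup>2" using p by (intro power_mono) auto
  then show ?thesis using p by (simp add: fid_eq_trace_msqrt_congruence[OF \<rho> \<Phi>_psd])
qed

lemma psd_diff_square_if_test:
  assumes P: "psd P" and IP: "psd (mat 1 - P)"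
  shows "psd (P - P ** P)"
proof -
  let ?Q = "msqrt P"
  have "?Q ** (mat 1 - P) ** ?Q = P - P ** P"
    by (simp add: matrix_mult_diff_left matrix_mult_diff_right msqrt_square[OF P]
        flip: matrix_mul_assoc)
      (metis matrix_mul_assoc msqrt_square[OF P])
  then show ?thesis using psd_congruence[OF psd_msqrt[OF P] IP] by simp
qed

text \<open>\<open>\<surd>\<Phi> (1 - P) \<surd>\<Phi>\<close> is positive with trace \<open>1 - tr (P \<Phi>) \<le> 0\<close>, hence zero.\<close>
lemma test_mult_msqrt_state:
  assumes P: "psd P" and IP: "psd (mat 1 - P)" and \<Phi>: "is_state \<Phi>"
    and accept: "1 \<le> Re (trace (P ** \<Phi>))"
  shows "P ** msqrt \<Phi> = msqrt \<Phi>"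
proof -
  let ?G = "msqrt \<Phi>"
  have G: "psd ?G" "?G ** ?G = \<Phi>"
    using \<Phi> by (simp_all add: is_state_def psd_msqrt msqrt_square)
  let ?Y = "?G ** (mat 1 - P) ** ?G"
  have Y: "psd ?Y" by (rule psd_congruence[OF G(1) IP])
  have "trace ?Y = trace (((mat 1 - P) ** ?G) ** ?G)"
    by (metis matrix_mul_assoc trace_mul_sym)
  also have "\<dots> = trace \<Phi> - trace (P ** \<Phi>)"
    by (simp add: G(2) matrix_mult_diff_left trace_sub flip: matrix_mul_assoc)
  finally have "Re (trace ?Y) \<le> 0" using accept \<Phi> by (simp add: is_state_def)
  then have "?Y = 0" using trace_psd_nonneg[OF Y] psd_trace_eq_0[OF Y] by simp
  have "(mat 1 - P) *v (?G *v v) = 0" for v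
  proof (rule psd_qform_eq_0_imp_kernel[OF IP])
    show "Re (qform (mat 1 - P) (?G *v v)) = 0"
      using \<open>?Y = 0\<close> qform_congruence[OF psd_hermitian[OF G(1)], of v "mat 1 - P"] by simp
  qed
  then show ?thesis
    by (simp add: matrix_eq matrix_vector_mult_diff_rdistrib matrix_vector_mul_assoc[symmetric])
qed

lemma fid_le_trace_test:
  assumes \<rho>: "psd \<rho>" and \<Phi>: "is_state \<Phi>" and P: "psd P" and IP: "psd (mat 1 - P)"
    and accept: "1 \<le> Re (trace (P ** \<Phi>))"
  shows "fid \<rho> \<Phi> \<le> Re (trace (P ** \<rho>))"
proof -
  let ?R = "msqrt \<rho>" and ?G = "msqrt \<Phi>"
  have R: "psd ?R" "?R ** ?R = \<rho>" using \<rho> by (simp_all add: psd_msqrt msqrt_square)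
  have G: "psd ?G" "adj ?G ** ?G = \<Phi>"
    using \<Phi> by (simp_all add: is_state_def psd_msqrt msqrt_square psd_adj)
  have "fid \<rho> \<Phi> = (trace_norm ((?R ** P) ** ?G))\<^sup>2"
    by (simp add: fid_def test_mult_msqrt_state[OF P IP \<Phi> accept] flip: matrix_mul_assoc)
  also have "\<dots> \<le> Re (trace ((?R ** P) ** adj (?R ** P))) * Re (trace (adj ?G ** ?G))"
    by (rule trace_norm_mult_le)
  also have "\<dots> = Re (trace (?R ** (P ** P) ** ?R))"
    using \<Phi> by (simp add: G(2) is_state_def adj_matrix_mult psd_adj R(1) P matrix_mul_assoc)
  also have "\<dots> \<le> Re (trace (?R ** P ** ?R))"
    using trace_psd_nonneg[OF psd_congruence[OF R(1) psd_diff_square_if_test[OF P IP]]]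
    by (simp add: matrix_mult_diff_left matrix_mult_diff_right trace_sub)
  also have "\<dots> = Re (trace (P ** \<rho>))"
    by (metis R(2) matrix_mul_assoc trace_mul_sym)
  finally show ?thesis .
qed

section \<open>Hypothesis testing and robustness measures\<close>

abbreviation robust_mix :: "real \<Rightarrow> complex^'n^'n \<Rightarrow> complex^'n^'n \<Rightarrow> complex^'n^'n" where
  "robust_mix s \<rho> \<tau> \<equiv> (1 / (1 + s)) *\<^sub>R (\<rho> + s *\<^sub>R \<tau>)"

text \<open>Robustness against noise from the class \<open>Q\<close>: \<open>D\<^sub>m\<^sub>a\<^sub>x\<^sub>,\<^sub>F\<close> is the case \<open>Q = is_state\<close>
  and \<open>D\<^sub>s\<^sub>,\<^sub>F\<close> the case \<open>Q = (\<lambda>\<tau>. \<tau> \<in> F)\<close>.\<close>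
definition Drob :: "(complex^'n^'n \<Rightarrow> bool) \<Rightarrow> (complex^'n^'n) set \<Rightarrow> complex^'n^'n \<Rightarrow> ereal" where
  "Drob Q F \<rho> = (INF s \<in> {s. 0 \<le> s \<and> (\<exists>\<tau>. Q \<tau> \<and> robust_mix s \<rho> \<tau> \<in> F)}. ereal (log 2 (1 + s)))"

definition Drob_eps ::
    "(complex^'n^'n \<Rightarrow> bool) \<Rightarrow> (complex^'n^'n) set \<Rightarrow> real \<Rightarrow> complex^'n^'n \<Rightarrow> ereal" where
  "Drob_eps Q F \<epsilon> \<rho> = (INF \<rho>' \<in> {\<rho>'. is_state \<rho>' \<and> 1 - \<epsilon> \<le> fid \<rho>' \<rho>}. Drob Q F \<rho>')"

lemma Dmax_F_eq_Drob: "Dmax_F F \<rho> = Drob is_state F \<rho>"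
  by (simp add: Dmax_F_def Drob_def)

lemma Ds_F_eq_Drob: "Ds_F F \<rho> = Drob (\<lambda>\<tau>. \<tau> \<in> F) F \<rho>"
  by (simp add: Ds_F_def Drob_def)

lemma Dmax_eps_eq_Drob_eps: "Dmax_eps F \<epsilon> \<rho> = Drob_eps is_state F \<epsilon> \<rho>"
  by (simp add: Dmax_eps_def Drob_eps_def Dmax_F_eq_Drob)

lemma Ds_eps_eq_Drob_eps: "Ds_eps F \<epsilon> \<rho> = Drob_eps (\<lambda>\<tau>. \<tau> \<in> F) F \<epsilon> \<rho>"
  by (simp add: Ds_eps_def Drob_eps_def Ds_F_eq_Drob)

lemma Drob_le: "0 \<le> s \<Longrightarrow> Q \<tau> \<Longrightarrow> robust_mix s \<rho> \<tau> \<in> F \<Longrightarrow> Drob Q F \<rho> \<le> ereal (log 2 (1 + s))"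
  unfolding Drob_def by (rule INF_lower) blast

lemma Drob_nonneg: "0 \<le> Drob Q F \<rho>"
  unfolding Drob_def by (rule INF_greatest) simp

lemma Drob_antimono: "(\<And>\<tau>. Q \<tau> \<Longrightarrow> Q' \<tau>) \<Longrightarrow> Drob Q' F \<rho> \<le> Drob Q F \<rho>"
  unfolding Drob_def by (rule INF_superset_mono) auto

lemma Drob_eps_le: "is_state \<rho>' \<Longrightarrow> 1 - \<epsilon> \<le> fid \<rho>' \<rho> \<Longrightarrow> Drob_eps Q F \<epsilon> \<rho> \<le> Drob Q F \<rho>'"
  unfolding Drob_eps_def by (rule INF_lower) simp

lemma DH_set_antimono: "S \<subseteq> T \<Longrightarrow> DH_set \<epsilon> T \<Phi> \<le> DH_set \<epsilon> S \<Phi>"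
  unfolding DH_set_def by (rule INF_superset_mono) auto

lemma trace_mult_scaleR_right: "trace (P ** (k *\<^sub>R A)) = of_real k * trace (P ** (A::complex^'n^'n))"
  by (simp add: trace_def matrix_matrix_mult_def sum_distrib_left scaleR_complex algebra_simps)

lemma trace_mult_scaleR_left: "trace ((k *\<^sub>R P) ** (A::complex^'n^'n)) = of_real k * trace (P ** A)"
  by (simp add: trace_def matrix_matrix_mult_def sum_distrib_left scaleR_complex algebra_simps)

lemma neglog_mult:
  assumes "0 < k"
  shows "neglog (k * x) = neglog x + ereal (- log 2 k)"
  using assms by (cases "x > 0") (simp_all add: neglog_def log_mult zero_less_mult_iff)

lemma neglog_trace_robust_mix_le:
  assumes \<epsilon>: "0 \<le> \<epsilon>" "\<epsilon> < 1" and s: "0 \<le> s" and P: "psd P" and \<tau>: "is_state \<tau>"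
    and accept: "1 - \<epsilon> \<le> Re (trace (P ** \<rho>))"
  shows "neglog (Re (trace (P ** robust_mix s \<rho> \<tau>))) \<le>
           ereal (log 2 (1 + s)) + ereal (log 2 (1 / (1 - \<epsilon>)))"
proof -
  have "0 \<le> Re (trace (P ** \<tau>))"
    using trace_mult_psd_nonneg[OF P] \<tau> by (simp add: is_state_def)
  then have "(1 - \<epsilon>) / (1 + s) \<le> Re (trace (P ** robust_mix s \<rho> \<tau>))"
    using accept s by (simp add: trace_mult_scaleR_right matrix_add_ldistrib trace_add
        divide_right_mono add_increasing2)
  moreover have "0 < (1 - \<epsilon>) / (1 + s)" using \<epsilon> s by simp
  ultimately have "- log 2 (Re (trace (P ** robust_mix s \<rho> \<tau>))) \<le> - log 2 ((1 - \<epsilon>) / (1 + s))"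
    and "Re (trace (P ** robust_mix s \<rho> \<tau>)) > 0"
    by simp_all
  moreover have "- log 2 ((1 - \<epsilon>) / (1 + s)) = log 2 (1 + s) + log 2 (1 / (1 - \<epsilon>))"
    using \<epsilon> s by (simp add: log_divide)
  ultimately show ?thesis by (simp add: neglog_def)
qed

lemma Dmin_add_le_DH:
  assumes \<epsilon>: "0 \<le> \<epsilon>" "\<epsilon> < 1" and \<Phi>: "is_state \<Phi>"
  shows "Dmin \<Phi> \<sigma> + ereal (log 2 (1 / (1 - \<epsilon>))) \<le> DH \<epsilon> \<Phi> \<sigma>"
proof -
  let ?tests = "\<lambda>\<epsilon>. {P. psd P \<and> psd (mat 1 - P) \<and> 1 - \<epsilon> \<le> Re (trace (P ** \<Phi>))}"
  have "mat 1 \<in> ?tests 0" using \<Phi> by (simp add: is_state_def psd_mat_1 psd_zero)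
  then have "?tests 0 \<noteq> {}" by blast
  then have "Dmin \<Phi> \<sigma> + ereal (log 2 (1 / (1 - \<epsilon>))) =
      (SUP P\<in>?tests 0. neglog (Re (trace (P ** \<sigma>))) + ereal (log 2 (1 / (1 - \<epsilon>))))"
    unfolding Dmin_def DH_def by (rule SUP_ereal_add_left[symmetric]) simp
  also have "\<dots> \<le> DH \<epsilon> \<Phi> \<sigma>"
  proof (rule SUP_least)
    fix P assume P: "P \<in> ?tests 0"
    have "mat 1 - (1 - \<epsilon>) *\<^sub>R P = (mat 1 - P) + \<epsilon> *\<^sub>R P" by (simp add: algebra_simps)
    moreover have "psd ((mat 1 - P) + \<epsilon> *\<^sub>R P)" using P \<epsilon> by (simp add: psd_add psd_scaleR)
    ultimately have "psd (mat 1 - (1 - \<epsilon>) *\<^sub>R P)" by (simp only:)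
    then have "(1 - \<epsilon>) *\<^sub>R P \<in> ?tests \<epsilon>"
      using P \<epsilon> by (simp add: psd_scaleR trace_mult_scaleR_left)
    then have "neglog (Re (trace (((1 - \<epsilon>) *\<^sub>R P) ** \<sigma>))) \<le> DH \<epsilon> \<Phi> \<sigma>"
      unfolding DH_def by (rule SUP_upper)
    then show "neglog (Re (trace (P ** \<sigma>))) + ereal (log 2 (1 / (1 - \<epsilon>))) \<le> DH \<epsilon> \<Phi> \<sigma>"
      using \<epsilon> by (simp add: trace_mult_scaleR_left neglog_mult log_divide)
  qed
  finally show ?thesis .
qed

lemma DH_robust_mix_le:
  assumes \<epsilon>: "0 \<le> \<epsilon>" "\<epsilon> < 1" and s: "0 \<le> s" and \<tau>: "is_state \<tau>"
  shows "DH \<epsilon> \<Phi> (robust_mix s \<Phi> \<tau>) \<le> ereal (log 2 (1 + s)) + ereal (log 2 (1 / (1 - \<epsilon>)))"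
  unfolding DH_def by (rule SUP_least) (blast intro: neglog_trace_robust_mix_le[OF \<epsilon> s _ \<tau>])

lemma Dmin_robust_mix_le_if_fid:
  assumes \<epsilon>: "0 \<le> \<epsilon>" "\<epsilon> < 1" and s: "0 \<le> s" and \<tau>: "is_state \<tau>" and \<Phi>: "is_state \<Phi>"
    and \<rho>: "psd \<rho>" and close: "1 - \<epsilon> \<le> fid \<rho> \<Phi>"
  shows "Dmin \<Phi> (robust_mix s \<rho> \<tau>) \<le> ereal (log 2 (1 + s)) + ereal (log 2 (1 / (1 - \<epsilon>)))"
  unfolding Dmin_def DH_def
proof (rule SUP_least)
  fix P assume "P \<in> {P. psd P \<and> psd (mat 1 - P) \<and> 1 - 0 \<le> Re (trace (P ** \<Phi>))}"
  then have P: "psd P" "psd (mat 1 - P)" "1 \<le> Re (trace (P ** \<Phi>))" by auto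
  have "1 - \<epsilon> \<le> Re (trace (P ** \<rho>))"
    using fid_le_trace_test[OF \<rho> \<Phi> P] close by linarith
  then show "neglog (Re (trace (P ** robust_mix s \<rho> \<tau>))) \<le>
      ereal (log 2 (1 + s)) + ereal (log 2 (1 / (1 - \<epsilon>)))"
    by (rule neglog_trace_robust_mix_le[OF \<epsilon> s P(1) \<tau>])
qed

lemma Dmin_set_add_le_DH_set:
  assumes "0 \<le> \<epsilon>" "\<epsilon> < 1" and "is_state \<Phi>"
  shows "Dmin_set S \<Phi> + ereal (log 2 (1 / (1 - \<epsilon>))) \<le> DH_set \<epsilon> S \<Phi>"
  unfolding DH_set_def
proof (rule INF_greatest)
  fix \<sigma> assume "\<sigma> \<in> S"
  then have "Dmin_set S \<Phi> \<le> Dmin \<Phi> \<sigma>"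
    unfolding Dmin_set_def DH_set_def Dmin_def by (rule INF_lower)
  then show "Dmin_set S \<Phi> + ereal (log 2 (1 / (1 - \<epsilon>))) \<le> DH \<epsilon> \<Phi> \<sigma>"
    using Dmin_add_le_DH[OF assms] by (meson add_right_mono order_trans)
qed

lemma DH_set_le_Drob_add:
  assumes \<epsilon>: "0 \<le> \<epsilon>" "\<epsilon> < 1" and Q: "\<And>\<tau>. Q \<tau> \<Longrightarrow> is_state \<tau>"
  shows "DH_set \<epsilon> F \<Phi> \<le> Drob Q F \<Phi> + ereal (log 2 (1 / (1 - \<epsilon>)))"
proof (cases "Drob Q F \<Phi>")
  case (real r)
  show ?thesis
  proof (rule ereal_le_epsilon2)
    fix d :: real assume "0 < d"
    then have "Drob Q F \<Phi> < ereal (r + d)" using real by simp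
    then obtain s \<tau> where s: "0 \<le> s" "Q \<tau>" "robust_mix s \<Phi> \<tau> \<in> F"
      and less: "ereal (log 2 (1 + s)) < ereal (r + d)"
      unfolding Drob_def by (auto simp: INF_less_iff)
    have "DH_set \<epsilon> F \<Phi> \<le> DH \<epsilon> \<Phi> (robust_mix s \<Phi> \<tau>)"
      unfolding DH_set_def by (rule INF_lower[OF s(3)])
    also have "\<dots> \<le> ereal (log 2 (1 + s)) + ereal (log 2 (1 / (1 - \<epsilon>)))"
      by (rule DH_robust_mix_le[OF \<epsilon> s(1) Q[OF s(2)]])
    also have "\<dots> \<le> Drob Q F \<Phi> + ereal (log 2 (1 / (1 - \<epsilon>))) + ereal d"
      using less by (simp add: real)
    finally show "DH_set \<epsilon> F \<Phi> \<le> Drob Q F \<Phi> + ereal (log 2 (1 / (1 - \<epsilon>))) + ereal d" .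
  qed
qed (use Drob_nonneg[of Q F \<Phi>] in simp_all)

lemma max_Dmin_set_diff_le_Drob_eps:
  assumes \<epsilon>: "0 \<le> \<epsilon>" "\<epsilon> < 1" and \<Phi>: "is_state \<Phi>" and Q: "\<And>\<tau>. Q \<tau> \<Longrightarrow> is_state \<tau>"
  shows "max (Dmin_set F \<Phi> - ereal (log 2 (1 / (1 - \<epsilon>)))) 0 \<le> Drob_eps Q F \<epsilon> \<Phi>"
  unfolding Drob_eps_def
proof (rule INF_greatest)
  fix \<rho> assume "\<rho> \<in> {\<rho>'. is_state \<rho>' \<and> 1 - \<epsilon> \<le> fid \<rho>' \<Phi>}"
  then have \<rho>: "psd \<rho>" and close: "1 - \<epsilon> \<le> fid \<rho> \<Phi>" by (auto simp: is_state_def)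
  show "max (Dmin_set F \<Phi> - ereal (log 2 (1 / (1 - \<epsilon>)))) 0 \<le> Drob Q F \<rho>"
    unfolding Drob_def
  proof (rule INF_greatest)
    fix s assume "s \<in> {s. 0 \<le> s \<and> (\<exists>\<tau>. Q \<tau> \<and> robust_mix s \<rho> \<tau> \<in> F)}"
    then obtain \<tau> where s: "0 \<le> s" and \<tau>: "Q \<tau>" and mem: "robust_mix s \<rho> \<tau> \<in> F" by auto
    have "Dmin_set F \<Phi> \<le> Dmin \<Phi> (robust_mix s \<rho> \<tau>)"
      unfolding Dmin_set_def DH_set_def Dmin_def by (rule INF_lower[OF mem])
    also have "\<dots> \<le> ereal (log 2 (1 + s)) + ereal (log 2 (1 / (1 - \<epsilon>)))"
      by (rule Dmin_robust_mix_le_if_fid[OF \<epsilon> s Q[OF \<tau>] \<Phi> \<rho> close])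
    finally show "max (Dmin_set F \<Phi> - ereal (log 2 (1 / (1 - \<epsilon>)))) 0 \<le> ereal (log 2 (1 + s))"
      using s by (cases "Dmin_set F \<Phi>") auto
  qed
qed

lemma is_state_convex_comb:
  assumes "is_state A" "is_state B" "0 \<le> a" "0 \<le> b" "a + b = 1"
  shows "is_state (a *\<^sub>R A + b *\<^sub>R B)"
  using assms by (auto simp: is_state_def psd_add psd_scaleR trace_add trace_scaleR
      simp flip: of_real_add)

lemma Drob_eps_le_diff_if_large:
  assumes \<epsilon>: "0 \<le> \<epsilon>" "\<epsilon> < 1" and \<Phi>: "is_state \<Phi>" and \<tau>: "Q \<tau>" "is_state \<tau>"
    and s: "1 \<le> (1 - \<epsilon>) * (1 + s)" and mem: "robust_mix s \<Phi> \<tau> \<in> F"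
  shows "Drob_eps Q F \<epsilon> \<Phi> \<le> ereal (log 2 (1 + s) - log 2 (1 / (1 - \<epsilon>)))"
proof -
  define \<rho> where "\<rho> = (1 - \<epsilon>) *\<^sub>R \<Phi> + \<epsilon> *\<^sub>R \<tau>"
  define s' where "s' = (1 - \<epsilon>) * (1 + s) - 1"
  have \<rho>_state: "is_state \<rho>"
    unfolding \<rho>_def by (rule is_state_convex_comb[OF \<Phi> \<tau>(2)]) (use \<epsilon> in auto)
  have "psd (\<rho> - (1 - \<epsilon>) *\<^sub>R \<Phi>)"
    using \<tau>(2) \<epsilon> by (simp add: \<rho>_def is_state_def psd_scaleR)
  then have close: "1 - \<epsilon> \<le> fid \<rho> \<Phi>"
    using fid_ge_if_psd_diff[OF _ \<Phi>] \<rho>_state \<epsilon> by (simp add: is_state_def)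
  have "\<rho> + s' *\<^sub>R \<tau> = (1 - \<epsilon>) *\<^sub>R (\<Phi> + s *\<^sub>R \<tau>)"
    by (simp add: \<rho>_def s'_def algebra_simps)
  then have "robust_mix s' \<rho> \<tau> = robust_mix s \<Phi> \<tau>"
    using \<epsilon> s by (simp add: s'_def)
  then have "Drob Q F \<rho> \<le> ereal (log 2 (1 + s'))"
    using Drob_le[of s' Q \<tau> \<rho> F] s \<tau>(1) mem by (simp add: s'_def)
  moreover have "log 2 (1 + s') = log 2 (1 + s) - log 2 (1 / (1 - \<epsilon>))"
  proof -
    have "0 < 1 + s" using s \<epsilon> by (smt (verit) mult_nonneg_nonpos)
    then show ?thesis using \<epsilon> by (simp add: s'_def log_mult log_divide)
  qed
  ultimately show ?thesis
    using Drob_eps_le[OF \<rho>_state close, of Q F] by simp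
qed

lemma Drob_eps_le_0_if_small:
  assumes \<Phi>: "is_state \<Phi>" and \<tau>: "is_state \<tau>" and F: "\<And>\<sigma>. \<sigma> \<in> F \<Longrightarrow> Q \<sigma>"
    and s: "0 \<le> s" "(1 - \<epsilon>) * (1 + s) \<le> 1" and mem: "robust_mix s \<Phi> \<tau> \<in> F"
  shows "Drob_eps Q F \<epsilon> \<Phi> \<le> 0"
proof -
  let ?\<sigma> = "robust_mix s \<Phi> \<tau>"
  have \<sigma>_eq: "?\<sigma> = (1 / (1 + s)) *\<^sub>R \<Phi> + (s / (1 + s)) *\<^sub>R \<tau>"
    by (simp add: scaleR_add_right)
  have \<sigma>_state: "is_state ?\<sigma>"
    unfolding \<sigma>_eq by (rule is_state_convex_comb[OF \<Phi> \<tau>]) (use s in \<open>auto simp: field_simps\<close>)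
  have "psd (?\<sigma> - (1 / (1 + s)) *\<^sub>R \<Phi>)"
    using \<tau> s by (simp add: \<sigma>_eq is_state_def psd_scaleR)
  then have "1 / (1 + s) \<le> fid ?\<sigma> \<Phi>"
    using fid_ge_if_psd_diff[OF _ \<Phi>] \<sigma>_state s by (simp add: is_state_def)
  moreover have "1 - \<epsilon> \<le> 1 / (1 + s)" using s by (simp add: field_simps)
  ultimately have "Drob_eps Q F \<epsilon> \<Phi> \<le> Drob Q F ?\<sigma>"
    using Drob_eps_le[OF \<sigma>_state] by simp
  also have "\<dots> \<le> ereal (log 2 (1 + 0))"
    using Drob_le[of 0 Q ?\<sigma> ?\<sigma> F] F[OF mem] mem by simp
  finally show ?thesis by (simp add: zero_ereal_def)
qed

lemma Drob_eps_le_Drob: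
  assumes \<epsilon>: "0 \<le> \<epsilon>" "\<epsilon> < 1" and \<Phi>: "is_state \<Phi>"
    and Q: "\<And>\<tau>. Q \<tau> \<Longrightarrow> is_state \<tau>" and F: "\<And>\<sigma>. \<sigma> \<in> F \<Longrightarrow> Q \<sigma>"
  shows "Drob_eps Q F \<epsilon> \<Phi> \<le> max (Drob Q F \<Phi> - ereal (log 2 (1 / (1 - \<epsilon>)))) 0"
proof -
  have bound: "Drob_eps Q F \<epsilon> \<Phi> \<le> max (ereal (log 2 (1 + s) - log 2 (1 / (1 - \<epsilon>)))) 0"
    if s: "0 \<le> s" and \<tau>: "Q \<tau>" and mem: "robust_mix s \<Phi> \<tau> \<in> F" for s \<tau>
  proof (cases "1 \<le> (1 - \<epsilon>) * (1 + s)")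
    case True
    then show ?thesis
      using Drob_eps_le_diff_if_large[where Q=Q, OF \<epsilon> \<Phi> \<tau> Q[OF \<tau>] True mem] by (simp add: le_max_iff_disj)
  next
    case False
    then show ?thesis
      using Drob_eps_le_0_if_small[OF \<Phi> Q[OF \<tau>] F s] mem by (simp add: le_max_iff_disj)
  qed
  show ?thesis
  proof (cases "Drob Q F \<Phi>")
    case (real r)
    show ?thesis
    proof (rule ereal_le_epsilon2)
      fix d :: real assume "0 < d"
      then have "Drob Q F \<Phi> < ereal (r + d)" using real by simp
      then obtain s \<tau> where s: "0 \<le> s" "Q \<tau>" "robust_mix s \<Phi> \<tau> \<in> F"
        and less: "log 2 (1 + s) < r + d"
        unfolding Drob_def by (auto simp: INF_less_iff)
      have "Drob_eps Q F \<epsilon> \<Phi> \<le> max (ereal (log 2 (1 + s) - log 2 (1 / (1 - \<epsilon>)))) 0"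
        by (rule bound[OF s])
      also have "\<dots> \<le> max (Drob Q F \<Phi> - ereal (log 2 (1 / (1 - \<epsilon>)))) 0 + ereal d"
        using less \<open>0 < d\<close> by (simp add: real max_def)
      finally show "Drob_eps Q F \<epsilon> \<Phi> \<le> max (Drob Q F \<Phi> - ereal (log 2 (1 / (1 - \<epsilon>)))) 0 + ereal d" .
    qed
  qed (use Drob_nonneg[of Q F \<Phi>] in simp_all)
qed

lemma ereal_max_diff_mono: "a \<le> (b::ereal) \<Longrightarrow> max (a - ereal c) 0 \<le> max (b - ereal c) 0"
  by (cases a; cases b) (auto simp: max_def)

lemma DH_set_eq_if_Dmin_set_eq_Drob:
  assumes FS: "F \<subseteq> S" and \<epsilon>: "0 \<le> \<epsilon>" "\<epsilon> < 1" and \<Phi>: "is_state \<Phi>"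
    and Q: "\<And>\<tau>. Q \<tau> \<Longrightarrow> is_state \<tau>" and r: "Dmin_set S \<Phi> = r" "Drob Q F \<Phi> = r"
  shows "DH_set \<epsilon> S \<Phi> = r + ereal (log 2 (1 / (1 - \<epsilon>)))"
    and "DH_set \<epsilon> F \<Phi> = r + ereal (log 2 (1 / (1 - \<epsilon>)))"
  using Dmin_set_add_le_DH_set[OF \<epsilon> \<Phi>, where S=S] DH_set_antimono[OF FS, where \<epsilon>=\<epsilon> and \<Phi>=\<Phi>]
    DH_set_le_Drob_add[where Q=Q and F=F and \<Phi>=\<Phi>, OF \<epsilon> Q] r
  by (auto intro: antisym)

lemma Drob_eps_eq_if_Dmin_set_eq_Drob:
  assumes FS: "F \<subseteq> S" and \<epsilon>: "0 \<le> \<epsilon>" "\<epsilon> < 1" and \<Phi>: "is_state \<Phi>"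
    and Q': "\<And>\<tau>. Q' \<tau> \<Longrightarrow> is_state \<tau>" and F: "\<And>\<sigma>. \<sigma> \<in> F \<Longrightarrow> Q' \<sigma>"
    and QQ': "\<And>\<tau>. Q \<tau> \<Longrightarrow> Q' \<tau>" and r: "Dmin_set S \<Phi> = r" "Drob Q F \<Phi> = r"
  shows "Drob_eps Q' F \<epsilon> \<Phi> = max (r - ereal (log 2 (1 / (1 - \<epsilon>)))) 0"
proof (rule antisym)
  have "Drob_eps Q' F \<epsilon> \<Phi> \<le> max (Drob Q' F \<Phi> - ereal (log 2 (1 / (1 - \<epsilon>)))) 0"
    by (rule Drob_eps_le_Drob[OF \<epsilon> \<Phi>]) (use Q' F in auto)
  also have "\<dots> \<le> max (r - ereal (log 2 (1 / (1 - \<epsilon>)))) 0"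
    by (rule ereal_max_diff_mono) (use Drob_antimono[of Q Q' F \<Phi>] QQ' r in auto)
  finally show "Drob_eps Q' F \<epsilon> \<Phi> \<le> max (r - ereal (log 2 (1 / (1 - \<epsilon>)))) 0" .
  have "r \<le> Dmin_set F \<Phi>"
    using DH_set_antimono[OF FS, of 0 \<Phi>] r by (simp add: Dmin_set_def)
  then have "max (r - ereal (log 2 (1 / (1 - \<epsilon>)))) 0 \<le>
      max (Dmin_set F \<Phi> - ereal (log 2 (1 / (1 - \<epsilon>)))) 0"
    by (rule ereal_max_diff_mono)
  also have "\<dots> \<le> Drob_eps Q' F \<epsilon> \<Phi>"
    by (rule max_Dmin_set_diff_le_Drob_eps[OF \<epsilon> \<Phi>]) (use Q' in auto)
  finally show "max (r - ereal (log 2 (1 / (1 - \<epsilon>)))) 0 \<le> Drob_eps Q' F \<epsilon> \<Phi>" .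
qed

theorem proposition1:
  fixes F :: "(complex^'n^'n) set" and \<Phi> :: "complex^'n^'n"
  assumes "F \<subseteq> {\<sigma>. is_state \<sigma>}" and "convex F" and "closed F"
    and "is_state \<Phi>"
  shows "(\<forall>r. Dmin_set F \<Phi> = r \<and> Ds_F F \<Phi> = r \<longrightarrow>
            (\<forall>\<epsilon>::real. 0 \<le> \<epsilon> \<and> \<epsilon> < 1 \<longrightarrow>
               DH_set \<epsilon> F \<Phi> = r + ereal (log 2 (1 / (1 - \<epsilon>))) \<and>
               Dmax_eps F \<epsilon> \<Phi> = max (r - ereal (log 2 (1 / (1 - \<epsilon>)))) 0 \<and>
               Ds_eps F \<epsilon> \<Phi> = max (r - ereal (log 2 (1 / (1 - \<epsilon>)))) 0))
       \<and> (\<forall>r. Dmin_set (affine hull F) \<Phi> = r \<and> Dmax_F F \<Phi> = r \<longrightarrow>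
            (\<forall>\<epsilon>::real. 0 \<le> \<epsilon> \<and> \<epsilon> < 1 \<longrightarrow>
               DH_set \<epsilon> (affine hull F) \<Phi> = r + ereal (log 2 (1 / (1 - \<epsilon>))) \<and>
               DH_set \<epsilon> F \<Phi> = r + ereal (log 2 (1 / (1 - \<epsilon>))) \<and>
               Dmax_eps F \<epsilon> \<Phi> = max (r - ereal (log 2 (1 / (1 - \<epsilon>)))) 0))"
proof -
  have free: "\<And>\<sigma>. \<sigma> \<in> F \<Longrightarrow> is_state \<sigma>" using assms(1) by blast
  have aff: "F \<subseteq> affine hull F" by (rule hull_subset)
  note DH_eq = DH_set_eq_if_Dmin_set_eq_Drob[OF _ _ _ assms(4)]
  note Drob_eps_eq = Drob_eps_eq_if_Dmin_set_eq_Drob[OF _ _ _ assms(4)]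
  show ?thesis
    unfolding Ds_F_eq_Drob Dmax_F_eq_Drob Dmax_eps_eq_Drob_eps Ds_eps_eq_Drob_eps
    using DH_eq[OF order_refl, where Q="\<lambda>\<tau>. \<tau> \<in> F"] DH_eq[OF aff, where Q=is_state]
      Drob_eps_eq[OF order_refl, where Q'=is_state and Q="\<lambda>\<tau>. \<tau> \<in> F"]
      Drob_eps_eq[OF order_refl, where Q'="\<lambda>\<tau>. \<tau> \<in> F" and Q="\<lambda>\<tau>. \<tau> \<in> F"]
      Drob_eps_eq[OF aff, where Q'=is_state and Q=is_state]
    by (simp add: free)
qed

end
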